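(* The following hold: (1) If $C$ is a one-sided error PACA with time complexity $T$, then there is a two-sided error PACA $C'$ with time complexity $O(T)$ such that $L(C')=L(C)$. (2) There is a language $L$ that is accepted by some constant-time two-sided error PACA but is not accepted by any one-sided error PACA with time complexity $T(n)=o(\sqrt{n})$.
   Context: A (bounded, one-dimensional) cellular automaton (CA) has a finite state set $Q$, a boundary symbol $\$\notin Q$, and a local transition function $\delta\colon Q_\$\times Q\times Q_\$\to Q$ where $Q_\$=Q\cup\{\$\}$. On a configuration $s=s_0\cdots s_{n-1}\in Q^n$ the global map is $\Delta(s)=\delta(\$,s_0,s_1)\,\delta(s_0,s_1,s_2)\cdots\delta(s_{n-2},s_{n-1},\$)$; cell $i$ is position $i\in\{0,\dots,n-1\}$. A PACA (probabilistic ACA) $C$ has a finite state set $Q$, an input alphabet $\Sigma\subseteq Q$, a set $A\subseteq Q$ of accepting states and two local transition functions $\delta_0,\delta_1$; at every step every cell independently tosses a fair coin $c\in\{0,1\}$ and updates its state by $\delta_c$ (applied to its left neighbor, itself, its right neighbor, with $\$$ beyond the borders). On input $x\in\Sigma^n$ the initial configuration is $x$; a computation is accepting if at some step all $n$ cells are simultaneously in $A$. $C$ has time complexity $T\colon\mathbb N_+\to\mathbb N_0$ if for every input $x$ of length $n$ every accepting computation reaches $A^n$ for the first time at a step $<T(n)$; then the coin tosses may be viewed as a matrix $R\in\{0,1\}^{T(n)\times n}$ ($R_j(i)$ = coin of cell $i$ in step $j$), and $C(x,R)\in\{0,1\}$ indicates acceptance; probabilities are over uniformly random $R$. For $p\in[0,1)$,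 $C$ is a one-sided $p$-error PACA for $L$ if for all $x$: $x\in L\iff\Pr[C(x,R)=1]\ge 1-p$ and $x\notin L\iff \Pr[C(x,R)=1]=0$; a one-sided error PACA means $p=1/2$. For $p<1/2$, $C$ is a two-sided $p$-error PACA for $L$ if $x\in L\iff\Pr[C(x,R)=1]\ge1-p$ and $x\notin L\iff\Pr[C(x,R)=1]\le p$; a two-sided error PACA means $p=1/3$. In both cases $L(C)=L$. Languages are subsets of $\Sigma^+$ (the empty word is never considered). A PACA is constant-time if its time complexity is bounded by a constant. *)

theory Defs
  imports Complex_Main "HOL-Library.Landau_Symbols"
begin

text \<open>States are natural numbers drawn from a finite carrier set; the boundary
  symbol is represented by None (so Q_$ corresponds to option values).\<close>

record paca =
  states :: "nat set"
  inp    :: "nat set"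
  acc    :: "nat set"
  delta0 :: "nat option \<Rightarrow> nat \<Rightarrow> nat option \<Rightarrow> nat"
  delta1 :: "nat option \<Rightarrow> nat \<Rightarrow> nat option \<Rightarrow> nat"

definition wf_paca :: "paca \<Rightarrow> bool" where
  "wf_paca C \<longleftrightarrow> finite (states C) \<and> inp C \<subseteq> states C \<and> acc C \<subseteq> states C \<and>
     (\<forall>l s r. (l = None \<or> the l \<in> states C) \<longrightarrow> s \<in> states C \<longrightarrow>
        (r = None \<or> the r \<in> states C) \<longrightarrow>
        delta0 C l s r \<in> states C \<and> delta1 C l s r \<in> states C)"

definition step :: "paca \<Rightarrow> (nat \<Rightarrow> bool) \<Rightarrow> nat list \<Rightarrow> nat list" where
  "step C r s = map (\<lambda>i. (if r i then delta1 C else delta0 C)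
       (if i = 0 then None else Some (s ! (i - 1)))
       (s ! i)
       (if i + 1 = length s then None else Some (s ! (i + 1)))) [0..<length s]"

text \<open>Configuration after t steps on input x with coin matrix R (R j i = coin of cell i in step j).\<close>
fun config :: "paca \<Rightarrow> nat list \<Rightarrow> (nat \<Rightarrow> nat \<Rightarrow> bool) \<Rightarrow> nat \<Rightarrow> nat list" where
  "config C x R 0 = x"
| "config C x R (Suc t) = step C (R t) (config C x R t)"

definition accepting_at :: "paca \<Rightarrow> nat list \<Rightarrow> (nat \<Rightarrow> nat \<Rightarrow> bool) \<Rightarrow> nat \<Rightarrow> bool" where
  "accepting_at C x R t \<longleftrightarrow> set (config C x R t) \<subseteq> acc C"

definition inputs :: "paca \<Rightarrow> nat list set" where
  "inputs C = {x. x \<noteq> [] \<and> set x \<subseteq> inp C}"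

definition has_time_complexity :: "paca \<Rightarrow> (nat \<Rightarrow> nat) \<Rightarrow> bool" where
  "has_time_complexity C T \<longleftrightarrow>
     (\<forall>x \<in> inputs C. \<forall>R t. accepting_at C x R t \<longrightarrow>
        (\<exists>t' < T (length x). accepting_at C x R t'))"

definition accepts :: "paca \<Rightarrow> (nat \<Rightarrow> nat) \<Rightarrow> nat list \<Rightarrow> (nat \<Rightarrow> nat \<Rightarrow> bool) \<Rightarrow> bool" where
  "accepts C T x R \<longleftrightarrow> (\<exists>t < T (length x). accepting_at C x R t)"

definition coin_matrices :: "nat \<Rightarrow> nat \<Rightarrow> (nat \<Rightarrow> nat \<Rightarrow> bool) set" where
  "coin_matrices m n = {R. \<forall>j i. \<not> (j < m \<and> i < n) \<longrightarrow> R j i = False}"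

definition acc_prob :: "paca \<Rightarrow> (nat \<Rightarrow> nat) \<Rightarrow> nat list \<Rightarrow> real" where
  "acc_prob C T x =
     real (card {R \<in> coin_matrices (T (length x)) (length x). accepts C T x R})
       / 2 ^ (T (length x) * length x)"

definition one_sided_paca :: "real \<Rightarrow> paca \<Rightarrow> (nat \<Rightarrow> nat) \<Rightarrow> nat list set \<Rightarrow> bool" where
  "one_sided_paca p C T L \<longleftrightarrow> wf_paca C \<and> has_time_complexity C T \<and> L \<subseteq> inputs C \<and>
     (\<forall>x \<in> inputs C. (x \<in> L \<longleftrightarrow> acc_prob C T x \<ge> 1 - p) \<and>
                     (x \<notin> L \<longleftrightarrow> acc_prob C T x = 0))"

definition two_sided_paca :: "real \<Rightarrow> paca \<Rightarrow> (nat \<Rightarrow> nat) \<Rightarrow> nat list set \<Rightarrow> bool" where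
  "two_sided_paca p C T L \<longleftrightarrow> wf_paca C \<and> has_time_complexity C T \<and> L \<subseteq> inputs C \<and>
     (\<forall>x \<in> inputs C. (x \<in> L \<longleftrightarrow> acc_prob C T x \<ge> 1 - p) \<and>
                     (x \<notin> L \<longleftrightarrow> acc_prob C T x \<le> p))"

end

theory Submission
  imports Defs "HOL-Library.FuncSet" "HOL-Library.Nat_Bijection" "HOL-Library.Disjoint_Sets"
begin

(* Part (1): let C' run two independent copies of C, interleaved in time: even steps advance
   copy A using the even coin rows, odd steps advance copy B using the odd coin rows, and C'
   accepts whenever the copy just advanced accepts. A word of L is then missed with probability
   (1 - p)^2 <= 1/4, a word outside L is still never accepted, and the time only doubles.

   Part (2): for the words over {0, 1} with at most one 1, every 1-cell draws two random bits and
   is accepting exactly at time 3 + (drawn number), while 0-cells always accept; two 1-cells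
   agree only with probability 1/4. Conversely, let a one-sided PACA run in time tau = T(n) and
   place 2 tau + 1 candidate positions for a single 1 at mutual distance > 2 tau. Each such
   word is accepted with probability >= 1/2. By locality, coins accepting two of these words at
   the same step t < tau would also accept the word carrying both 1s, which one-sided error
   forbids; so for every t the acceptance events are disjoint, and counting gives
   (2 tau + 1) / 2 <= tau. Hence n <= 2 tau (2 tau + 1), so T is not o(sqrt n). *)

definition left_nb :: "nat list \<Rightarrow> nat \<Rightarrow> nat option" where
  "left_nb s i = (if i = 0 then None else Some (s ! (i - 1)))"

definition right_nb :: "nat list \<Rightarrow> nat \<Rightarrow> nat option" where
  "right_nb s i = (if i + 1 = length s then None else Some (s ! (i + 1)))"

definition delta :: "paca \<Rightarrow> bool \<Rightarrow> nat option \<Rightarrow> nat \<Rightarrow> nat option \<Rightarrow> nat" where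
  "delta C c = (if c then delta1 C else delta0 C)"

lemma length_step [simp]: "length (step C r s) = length s"
  by (simp add: step_def)

lemma step_nth: "i < length s \<Longrightarrow> step C r s ! i = delta C (r i) (left_nb s i) (s ! i) (right_nb s i)"
  by (simp add: step_def delta_def left_nb_def right_nb_def)

lemma length_config [simp]: "length (config C x R t) = length x"
  by (induction t) auto

lemma map_option_left_nb:
  assumes "length a = length s" "\<And>k. k < length s \<Longrightarrow> f (s ! k) = a ! k" "i < length s"
  shows "map_option f (left_nb s i) = left_nb a i"
  using assms by (simp add: left_nb_def)

lemma map_option_right_nb:
  assumes "length a = length s" "\<And>k. k < length s \<Longrightarrow> f (s ! k) = a ! k" "i < length s"
  shows "map_option f (right_nb s i) = right_nb a i"
  using assms by (simp add: right_nb_def)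

lemma delta_closed:
  assumes "wf_paca C" "l = None \<or> the l \<in> states C" "s \<in> states C" "r = None \<or> the r \<in> states C"
  shows "delta C c l s r \<in> states C"
  using assms by (auto simp: wf_paca_def delta_def)

lemma left_right_nb_in:
  assumes "set s \<subseteq> A" "i < length s"
  shows "left_nb s i = None \<or> the (left_nb s i) \<in> A" "right_nb s i = None \<or> the (right_nb s i) \<in> A"
  using assms by (auto simp: left_nb_def right_nb_def)

lemma set_step_subset_states:
  assumes "wf_paca C" "set s \<subseteq> states C"
  shows "set (step C r s) \<subseteq> states C"
proof
  fix y assume "y \<in> set (step C r s)"
  then obtain i where "i < length s" "y = step C r s ! i"
    by (auto simp: in_set_conv_nth)
  then show "y \<in> states C"
    using assms left_right_nb_in[OF assms(2)] by (auto simp: step_nth intro!: delta_closed)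
qed

lemma set_config_subset_states:
  assumes "wf_paca C" "set x \<subseteq> states C"
  shows "set (config C x R t) \<subseteq> states C"
  by (induction t) (simp_all add: assms set_step_subset_states)

lemma config_nth_local:
  assumes "length y = length x" "i < length x"
    and "\<And>k. k < length x \<Longrightarrow> k \<le> i + t \<Longrightarrow> i \<le> k + t \<Longrightarrow> x ! k = y ! k"
  shows "config C x R t ! i = config C y R t ! i"
  using assms(2,3)
proof (induction t arbitrary: i)
  case 0
  then show ?case by simp
next
  case (Suc t)
  have "config C x R t ! k = config C y R t ! k" if "k < length x" "k \<le> i + 1" "i \<le> k + 1" for k
    using Suc.prems that by (intro Suc.IH) auto
  then show ?case
    using Suc.prems(1) assms(1) by (simp add: step_nth left_nb_def right_nb_def)
qed

lemma finite_coin_matrices: "finite (coin_matrices m n)"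
proof -
  let ?F = "{f :: nat \<times> nat \<Rightarrow> bool. \<forall>p. p \<notin> {..<m} \<times> {..<n} \<longrightarrow> f p = False}"
  have "coin_matrices m n \<subseteq> (\<lambda>f j i. f (j, i)) ` ?F"
  proof
    fix R assume "R \<in> coin_matrices m n"
    then show "R \<in> (\<lambda>f j i. f (j, i)) ` ?F"
      by (intro image_eqI[where x = "\<lambda>(j, i). R j i"]) (auto simp: coin_matrices_def)
  qed
  moreover have "finite ?F"
    using finite_set_of_finite_funs[of "{..<m} \<times> {..<n}" "UNIV :: bool set" False] by simp
  ultimately show ?thesis
    using finite_subset by blast
qed

lemma card_coin_matrices: "card (coin_matrices m n) = 2 ^ (m * n)"
proof -
  let ?D = "{..<m} \<times> {..<n}"
  have "bij_betw (\<lambda>R. restrict (\<lambda>(j, i). R j i) ?D) (coin_matrices m n) (PiE ?D (\<lambda>_. UNIV))"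
  proof (rule bij_betwI[where g = "\<lambda>f j i. (j, i) \<in> ?D \<and> f (j, i)"])
    fix f :: "nat \<times> nat \<Rightarrow> bool" assume "f \<in> PiE ?D (\<lambda>_. UNIV)"
    then show "restrict (\<lambda>(j, i). (j, i) \<in> ?D \<and> f (j, i)) ?D = f"
      by (auto simp: PiE_def extensional_def fun_eq_iff)
  qed (auto simp: coin_matrices_def fun_eq_iff)
  then have "card (coin_matrices m n) = card (PiE ?D (\<lambda>_. UNIV :: bool set))"
    by (rule bij_betw_same_card)
  then show ?thesis
    by (simp add: card_PiE card_cartesian_product)
qed

lemma acc_prob_eq_0_iff:
  "acc_prob C T x = 0 \<longleftrightarrow> (\<forall>R \<in> coin_matrices (T (length x)) (length x). \<not> accepts C T x R)"
  by (auto simp: acc_prob_def finite_coin_matrices)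

lemma acc_prob_ge_half_iff:
  "acc_prob C T x \<ge> 1/2 \<longleftrightarrow>
     card (coin_matrices (T (length x)) (length x))
       \<le> 2 * card {R \<in> coin_matrices (T (length x)) (length x). accepts C T x R}"
proof -
  have "acc_prob C T x \<ge> 1/2 \<longleftrightarrow>
      real (card (coin_matrices (T (length x)) (length x)))
        \<le> 2 * real (card {R \<in> coin_matrices (T (length x)) (length x). accepts C T x R})"
    by (simp add: acc_prob_def card_coin_matrices field_simps)
  then show ?thesis
    by linarith
qed

lemma acc_prob_le_1: "acc_prob C T x \<le> 1"
  using card_mono[OF finite_coin_matrices, of "{R \<in> coin_matrices (T (length x)) (length x). accepts C T x R}"]
  by (simp add: acc_prob_def card_coin_matrices divide_le_eq flip: of_nat_le_iff)

definition flip :: "nat \<Rightarrow> nat \<Rightarrow> (nat \<Rightarrow> nat \<Rightarrow> bool) \<Rightarrow> nat \<Rightarrow> nat \<Rightarrow> bool" where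
  "flip j i R = R(j := (R j)(i := \<not> R j i))"

lemma flip_apply: "flip j i R j' i' = (if j' = j \<and> i' = i then \<not> R j i else R j' i')"
  by (simp add: flip_def)

lemma flip_flip [simp]: "flip j i (flip j i R) = R"
  by (simp add: flip_def fun_eq_iff)

lemma flip_in_coin_matrices:
  "j < m \<Longrightarrow> i < n \<Longrightarrow> R \<in> coin_matrices m n \<Longrightarrow> flip j i R \<in> coin_matrices m n"
  by (auto simp: coin_matrices_def flip_apply)

lemma card_halved_by_involution:
  assumes "finite M" "\<And>R. R \<in> M \<Longrightarrow> f R \<in> M" "\<And>R. R \<in> M \<Longrightarrow> f (f R) = R"
    and "\<And>R. R \<in> M \<Longrightarrow> P (f R) \<longleftrightarrow> \<not> P R"
  shows "2 * card {R \<in> M. P R} = card M"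
proof -
  have "bij_betw f {R \<in> M. P R} {R \<in> M. \<not> P R}"
    by (rule bij_betwI[where g = f]) (use assms in auto)
  then have "card {R \<in> M. P R} = card {R \<in> M. \<not> P R}"
    by (rule bij_betw_same_card)
  moreover have "card M = card {R \<in> M. P R} + card {R \<in> M. \<not> P R}"
    using assms(1) by (subst card_Un_disjoint[symmetric]) (auto intro: arg_cong[where f = card])
  ultimately show ?thesis
    by simp
qed

lemma card_coins_agree:
  assumes "finite M" "\<And>R. R \<in> M \<Longrightarrow> flip j l R \<in> M" "k \<noteq> l"
  shows "2 * card {R \<in> M. R j k = R j l} = card M"
  by (rule card_halved_by_involution[where f = "flip j l"]) (use assms in \<open>auto simp: flip_apply\<close>)

section \<open>Amplification by two interleaved runs\<close>

text \<open>A state of \<open>pair_paca C\<close> is either an input symbol \<open>s\<close>, read as the pair \<open>(s, s)\<close> in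
  phase 0, or a code of a pair of \<open>C\<close>-states with a phase bit; codes lie above all states of
  \<open>C\<close>, so they never clash with input symbols. All cells share the phase, so the two components run
  independent copies of \<open>C\<close> on the even and on the odd coin rows.\<close>

definition code_offset :: "paca \<Rightarrow> nat" where
  "code_offset C = Suc (Max (insert 0 (states C)))"

definition encode_pair :: "paca \<Rightarrow> nat \<Rightarrow> nat \<Rightarrow> nat \<Rightarrow> nat" where
  "encode_pair C a b ph = code_offset C + 2 * prod_encode (a, b) + ph"

definition dec_fst :: "paca \<Rightarrow> nat \<Rightarrow> nat" where
  "dec_fst C s = (if s \<in> inp C then s else fst (prod_decode ((s - code_offset C) div 2)))"

definition dec_snd :: "paca \<Rightarrow> nat \<Rightarrow> nat" where
  "dec_snd C s = (if s \<in> inp C then s else snd (prod_decode ((s - code_offset C) div 2)))"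

definition dec_phase :: "paca \<Rightarrow> nat \<Rightarrow> nat" where
  "dec_phase C s = (if s \<in> inp C then 0 else (s - code_offset C) mod 2)"

definition pair_step :: "paca \<Rightarrow> bool \<Rightarrow> nat option \<Rightarrow> nat \<Rightarrow> nat option \<Rightarrow> nat" where
  "pair_step C c l s r =
     (if dec_phase C s = 0
      then encode_pair C (delta C c (map_option (dec_fst C) l) (dec_fst C s) (map_option (dec_fst C) r))
             (dec_snd C s) 1
      else encode_pair C (dec_fst C s)
             (delta C c (map_option (dec_snd C) l) (dec_snd C s) (map_option (dec_snd C) r)) 0)"

definition pair_states :: "paca \<Rightarrow> nat set" where
  "pair_states C = inp C \<union> (\<lambda>(a, b, ph). encode_pair C a b ph) ` (states C \<times> states C \<times> {0, 1})"

definition pair_paca :: "paca \<Rightarrow> paca" where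
  "pair_paca C =
     \<lparr>states = pair_states C, inp = inp C,
      acc = {s \<in> pair_states C. if dec_phase C s = 0 then dec_fst C s \<in> acc C else dec_snd C s \<in> acc C},
      delta0 = pair_step C False, delta1 = pair_step C True\<rparr>"

lemma encode_pair_notin_inp:
  assumes "wf_paca C"
  shows "encode_pair C a b ph \<notin> inp C"
proof
  assume "encode_pair C a b ph \<in> inp C"
  with assms have "encode_pair C a b ph \<in> states C" "finite (states C)"
    by (auto simp: wf_paca_def)
  then have "encode_pair C a b ph < code_offset C"
    by (simp add: code_offset_def le_imp_less_Suc)
  then show False
    by (simp add: encode_pair_def)
qed

lemma decode_encode_pair:
  assumes "wf_paca C" "ph < 2"
  shows "dec_fst C (encode_pair C a b ph) = a" "dec_snd C (encode_pair C a b ph) = b"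
    "dec_phase C (encode_pair C a b ph) = ph"
  using assms encode_pair_notin_inp[OF assms(1)]
  by (simp_all add: dec_fst_def dec_snd_def dec_phase_def encode_pair_def)

lemma decode_inp: "s \<in> inp C \<Longrightarrow> dec_fst C s = s \<and> dec_snd C s = s \<and> dec_phase C s = 0"
  by (simp add: dec_fst_def dec_snd_def dec_phase_def)

lemma decode_pair_states:
  assumes "wf_paca C" "s \<in> pair_states C"
  shows "dec_fst C s \<in> states C \<and> dec_snd C s \<in> states C \<and> dec_phase C s < 2"
  using assms decode_inp[of s C] decode_encode_pair[OF assms(1)]
  by (auto simp: pair_states_def wf_paca_def)

lemma encode_pair_in_pair_states:
  "a \<in> states C \<Longrightarrow> b \<in> states C \<Longrightarrow> ph < 2 \<Longrightarrow> encode_pair C a b ph \<in> pair_states C"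
  unfolding pair_states_def by (rule UnI2, rule image_eqI[where x = "(a, b, ph)"]) auto

lemma map_option_decode_states:
  assumes "wf_paca C" "l = None \<or> the l \<in> pair_states C"
  shows "map_option (dec_fst C) l = None \<or> the (map_option (dec_fst C) l) \<in> states C"
    "map_option (dec_snd C) l = None \<or> the (map_option (dec_snd C) l) \<in> states C"
  using assms decode_pair_states[OF assms(1)] by (cases l; auto)+

lemma wf_pair_paca:
  assumes "wf_paca C"
  shows "wf_paca (pair_paca C)"
proof -
  have "finite (pair_states C)"
    using assms by (auto simp: wf_paca_def pair_states_def intro: finite_subset)
  moreover have "pair_step C c l s r \<in> pair_states C"
    if "l = None \<or> the l \<in> pair_states C" "s \<in> pair_states C" "r = None \<or> the r \<in> pair_states C"
    for c l s r
    using decode_pair_states[OF assms that(2)]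
      map_option_decode_states[OF assms that(1)] map_option_decode_states[OF assms that(3)]
    by (auto simp: pair_step_def intro!: encode_pair_in_pair_states delta_closed[OF assms])
  ultimately show ?thesis
    by (auto simp: wf_paca_def pair_paca_def pair_states_def)
qed

definition pair_decodes :: "paca \<Rightarrow> nat \<Rightarrow> nat list \<Rightarrow> nat list \<Rightarrow> nat list \<Rightarrow> bool" where
  "pair_decodes C ph s a b \<longleftrightarrow> length a = length s \<and> length b = length s \<and>
     (\<forall>i < length s. dec_fst C (s ! i) = a ! i \<and> dec_snd C (s ! i) = b ! i \<and> dec_phase C (s ! i) = ph)"

lemma delta_pair_paca: "delta (pair_paca C) c = pair_step C c"
  by (simp add: delta_def pair_paca_def)

lemma step_pair_paca_phase0:
  assumes "wf_paca C" "pair_decodes C 0 s a b"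
  shows "pair_decodes C 1 (step (pair_paca C) r s) (step C r a) b"
  using assms map_option_left_nb[of a s "dec_fst C"] map_option_right_nb[of a s "dec_fst C"]
  by (auto simp: pair_decodes_def step_nth delta_pair_paca pair_step_def decode_encode_pair)

lemma step_pair_paca_phase1:
  assumes "wf_paca C" "pair_decodes C 1 s a b"
  shows "pair_decodes C 0 (step (pair_paca C) r s) a (step C r b)"
  using assms map_option_left_nb[of b s "dec_snd C"] map_option_right_nb[of b s "dec_snd C"]
  by (auto simp: pair_decodes_def step_nth delta_pair_paca pair_step_def decode_encode_pair)

definition even_rows :: "(nat \<Rightarrow> nat \<Rightarrow> bool) \<Rightarrow> nat \<Rightarrow> nat \<Rightarrow> bool" where
  "even_rows R j = R (2 * j)"

definition odd_rows :: "(nat \<Rightarrow> nat \<Rightarrow> bool) \<Rightarrow> nat \<Rightarrow> nat \<Rightarrow> bool" where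
  "odd_rows R j = R (2 * j + 1)"

lemma config_pair_paca:
  assumes "wf_paca C" "set x \<subseteq> inp C"
  shows "pair_decodes C 0 (config (pair_paca C) x R (2 * t))
           (config C x (even_rows R) t) (config C x (odd_rows R) t)"
    "pair_decodes C 1 (config (pair_paca C) x R (2 * t + 1))
           (config C x (even_rows R) (Suc t)) (config C x (odd_rows R) t)"
proof (induction t)
  case 0
  show "pair_decodes C 0 (config (pair_paca C) x R (2 * 0)) (config C x (even_rows R) 0)
          (config C x (odd_rows R) 0)"
    using assms(2) decode_inp by (auto simp: pair_decodes_def subset_iff)
  then show "pair_decodes C 1 (config (pair_paca C) x R (2 * 0 + 1))
               (config C x (even_rows R) (Suc 0)) (config C x (odd_rows R) 0)"
    using step_pair_paca_phase0[OF assms(1)] by (simp add: even_rows_def)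
next
  case (Suc t)
  have odd_step: "config (pair_paca C) x R (2 * Suc t) =
      step (pair_paca C) (odd_rows R t) (config (pair_paca C) x R (2 * t + 1))"
    by (simp add: odd_rows_def)
  have even_step: "config (pair_paca C) x R (2 * Suc t + 1) =
      step (pair_paca C) (even_rows R (Suc t)) (config (pair_paca C) x R (2 * Suc t))"
    by (simp add: even_rows_def)
  from Suc(2) show *: "pair_decodes C 0 (config (pair_paca C) x R (2 * Suc t))
          (config C x (even_rows R) (Suc t)) (config C x (odd_rows R) (Suc t))"
    unfolding odd_step using step_pair_paca_phase1[OF assms(1)] by simp
  then show "pair_decodes C 1 (config (pair_paca C) x R (2 * Suc t + 1))
               (config C x (even_rows R) (Suc (Suc t))) (config C x (odd_rows R) (Suc t))"
    unfolding even_step using step_pair_paca_phase0[OF assms(1)] by simp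
qed

lemma set_subset_acc_pair_paca:
  assumes "set s \<subseteq> pair_states C" "pair_decodes C ph s a b"
  shows "set s \<subseteq> acc (pair_paca C) \<longleftrightarrow> set (if ph = 0 then a else b) \<subseteq> acc C"
  using assms unfolding subset_code(1) all_set_conv_all_nth by (auto simp: pair_decodes_def pair_paca_def)

lemma config_pair_paca_states:
  assumes "wf_paca C" "set x \<subseteq> inp C"
  shows "set (config (pair_paca C) x R t) \<subseteq> pair_states C"
proof -
  have "set x \<subseteq> states (pair_paca C)"
    using assms(2) by (auto simp: pair_paca_def pair_states_def)
  then show ?thesis
    using set_config_subset_states[OF wf_pair_paca[OF assms(1)]] by (simp add: pair_paca_def)
qed

lemma accepting_at_pair_paca:
  assumes "wf_paca C" "set x \<subseteq> inp C"
  shows "accepting_at (pair_paca C) x R (2 * t) \<longleftrightarrow> accepting_at C x (even_rows R) t"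
    "accepting_at (pair_paca C) x R (2 * t + 1) \<longleftrightarrow> accepting_at C x (odd_rows R) t"
  using set_subset_acc_pair_paca[OF config_pair_paca_states[OF assms] config_pair_paca(1)[OF assms]]
    set_subset_acc_pair_paca[OF config_pair_paca_states[OF assms] config_pair_paca(2)[OF assms]]
  by (simp_all add: accepting_at_def)

lemma ex_less_double_iff:
  "(\<exists>t < 2 * m. P t) \<longleftrightarrow> (\<exists>t < m. P (2 * t)) \<or> (\<exists>t < m. P (2 * t + 1))" for m :: nat
proof
  assume "\<exists>t < 2 * m. P t"
  then obtain t where "t < 2 * m" "P t"
    by blast
  then show "(\<exists>t < m. P (2 * t)) \<or> (\<exists>t < m. P (2 * t + 1))"
    by (cases "even t") (auto elim!: evenE oddE)
next
  assume "(\<exists>t < m. P (2 * t)) \<or> (\<exists>t < m. P (2 * t + 1))"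
  then show "\<exists>t < 2 * m. P t"
  proof (elim disjE exE conjE)
    fix t assume "t < m" "P (2 * t)"
    then show ?thesis by (intro exI[of _ "2 * t"]) simp
  next
    fix t assume "t < m" "P (2 * t + 1)"
    then show ?thesis by (intro exI[of _ "2 * t + 1"]) simp
  qed
qed

lemma accepts_pair_paca:
  assumes "wf_paca C" "set x \<subseteq> inp C"
  shows "accepts (pair_paca C) (\<lambda>n. 2 * T n) x R \<longleftrightarrow>
           accepts C T x (even_rows R) \<or> accepts C T x (odd_rows R)"
  unfolding accepts_def ex_less_double_iff accepting_at_pair_paca[OF assms] ..

lemma time_pair_paca:
  assumes "wf_paca C" "has_time_complexity C T"
  shows "has_time_complexity (pair_paca C) (\<lambda>n. 2 * T n)"
  unfolding has_time_complexity_def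
proof (intro ballI allI impI)
  fix x R t
  assume x: "x \<in> inputs (pair_paca C)" and acc: "accepting_at (pair_paca C) x R t"
  then have x': "x \<in> inputs C" and xs: "set x \<subseteq> inp C"
    by (simp_all add: inputs_def pair_paca_def)
  have "accepts C T x (even_rows R) \<or> accepts C T x (odd_rows R)"
  proof (cases "even t")
    case True
    with acc have "accepting_at C x (even_rows R) (t div 2)"
      using accepting_at_pair_paca(1)[OF assms(1) xs] by (auto elim!: evenE)
    then show ?thesis
      using assms(2) x' by (auto simp: has_time_complexity_def accepts_def)
  next
    case False
    with acc have "accepting_at C x (odd_rows R) (t div 2)"
      using accepting_at_pair_paca(2)[OF assms(1) xs] by (auto elim!: oddE)
    then show ?thesis
      using assms(2) x' by (auto simp: has_time_complexity_def accepts_def)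
  qed
  then show "\<exists>t' < 2 * T (length x). accepting_at (pair_paca C) x R t'"
    using accepts_pair_paca[OF assms(1) xs] by (simp add: accepts_def)
qed

lemma bij_betw_split_rows:
  "bij_betw (\<lambda>R. (even_rows R, odd_rows R)) (coin_matrices (2 * m) n)
     (coin_matrices m n \<times> coin_matrices m n)"
proof (rule bij_betwI[where g = "\<lambda>(A, B) j. if even j then A (j div 2) else B (j div 2)"])
  have "\<not> j div 2 < m" if "\<not> j < 2 * m" for j
    using that by linarith
  then show "(\<lambda>(A, B) j. if even j then A (j div 2) else B (j div 2))
      \<in> coin_matrices m n \<times> coin_matrices m n \<rightarrow> coin_matrices (2 * m) n"
    by (auto simp: coin_matrices_def split: if_splits)
qed (auto simp: coin_matrices_def even_rows_def odd_rows_def fun_eq_iff elim: oddE)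

lemma acc_prob_pair_paca:
  assumes "wf_paca C" "x \<in> inputs C"
  shows "acc_prob (pair_paca C) (\<lambda>n. 2 * T n) x = 1 - (1 - acc_prob C T x) ^ 2"
proof -
  define M where "M = coin_matrices (T (length x)) (length x)"
  define N where "N = {R \<in> M. \<not> accepts C T x R}"
  have fin: "finite M" and card_M: "card M = 2 ^ (T (length x) * length x)"
    by (simp_all add: M_def finite_coin_matrices card_coin_matrices)
  have "bij_betw (\<lambda>R. (even_rows R, odd_rows R))
      {R \<in> coin_matrices (2 * T (length x)) (length x). accepts (pair_paca C) (\<lambda>n. 2 * T n) x R}
      {q \<in> M \<times> M. accepts C T x (fst q) \<or> accepts C T x (snd q)}"
    unfolding M_def using assms
    by (intro bij_betw_Collect[OF bij_betw_split_rows]) (simp add: accepts_pair_paca inputs_def)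
  moreover have "{q \<in> M \<times> M. accepts C T x (fst q) \<or> accepts C T x (snd q)} = M \<times> M - N \<times> N"
    by (auto simp: N_def)
  ultimately have "card {R \<in> coin_matrices (2 * T (length x)) (length x).
      accepts (pair_paca C) (\<lambda>n. 2 * T n) x R} = card (M \<times> M - N \<times> N)"
    by (simp add: bij_betw_same_card)
  also have "\<dots> = card M * card M - card N * card N"
    using fin by (subst card_Diff_subset) (auto simp: N_def card_cartesian_product)
  moreover have "card N \<le> card M"
    using fin by (auto simp: N_def intro: card_mono)
  moreover have "card {R \<in> M. accepts C T x R} = card M - card N"
    using fin by (subst card_Diff_subset[symmetric]) (auto simp: N_def intro: arg_cong[where f = card])
  moreover have "(2 :: real) ^ (2 * T (length x) * length x) = real (card M) * real (card M)"
    by (simp add: card_M power_mult_distrib flip: power_add)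
  ultimately show ?thesis
    using card_M by (simp add: acc_prob_def M_def mult_le_mono field_simps power2_eq_square)
qed

lemma two_sided_pair_paca:
  assumes "one_sided_paca (1/2) C T L"
  shows "two_sided_paca (1/3) (pair_paca C) (\<lambda>n. 2 * T n) L"
  unfolding two_sided_paca_def
proof (intro conjI ballI)
  have wf: "wf_paca C" and L: "L \<subseteq> inputs C"
    and prob: "\<And>x. x \<in> inputs C \<Longrightarrow> (x \<in> L \<longleftrightarrow> acc_prob C T x \<ge> 1/2) \<and> (x \<notin> L \<longleftrightarrow> acc_prob C T x = 0)"
    using assms by (auto simp: one_sided_paca_def)
  show "wf_paca (pair_paca C)" "has_time_complexity (pair_paca C) (\<lambda>n. 2 * T n)"
    using assms wf_pair_paca time_pair_paca by (auto simp: one_sided_paca_def)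
  show "L \<subseteq> inputs (pair_paca C)"
    using L by (simp add: inputs_def pair_paca_def)
  fix x assume "x \<in> inputs (pair_paca C)"
  then have x: "x \<in> inputs C"
    by (simp add: inputs_def pair_paca_def)
  have "acc_prob (pair_paca C) (\<lambda>n. 2 * T n) x \<ge> 3/4" if "x \<in> L"
  proof -
    have "(1 - acc_prob C T x) ^ 2 \<le> (1/2) ^ 2"
      using that prob[OF x] acc_prob_le_1[of C T x] by (intro power_mono) auto
    then show ?thesis
      using acc_prob_pair_paca[OF wf x, of T] by (simp add: power2_eq_square)
  qed
  moreover have "acc_prob (pair_paca C) (\<lambda>n. 2 * T n) x = 0" if "x \<notin> L"
  proof -
    have "acc_prob C T x = 0"
      using that prob[OF x] by blast
    then show ?thesis
      using acc_prob_pair_paca[OF wf x, of T] by simp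
  qed
  ultimately show "x \<in> L \<longleftrightarrow> 1 - 1/3 \<le> acc_prob (pair_paca C) (\<lambda>n. 2 * T n) x"
    and "x \<notin> L \<longleftrightarrow> acc_prob (pair_paca C) (\<lambda>n. 2 * T n) x \<le> 1/3"
    by (cases "x \<in> L"; simp)+
qed

section \<open>A constant-time two-sided PACA for words with at most one 1\<close>

text \<open>States 1, 2, 3 read two coins \<open>b\<^sub>0, b\<^sub>1\<close> into \<open>4 + 2 b\<^sub>0 + b\<^sub>1\<close>; counting down to 4
  leads to the accepting state 8 exactly at time \<open>3 + 2 b\<^sub>0 + b\<^sub>1\<close>, after which the cell
  rejects forever (state 9).\<close>

definition lottery_tick :: "bool \<Rightarrow> nat \<Rightarrow> nat" where
  "lottery_tick c s =
     (if s \<in> {1, 2, 3} then 2 * s + of_bool c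
      else if s \<in> {5, 6, 7} then s - 1
      else if s = 4 then 8
      else if s = 0 then 0 else 9)"

definition lottery_paca :: paca where
  "lottery_paca =
     \<lparr>states = {0..9}, inp = {0, 1}, acc = {0, 8},
      delta0 = (\<lambda>_ s _. lottery_tick False s), delta1 = (\<lambda>_ s _. lottery_tick True s)\<rparr>"

fun lottery_run :: "nat \<Rightarrow> (nat \<Rightarrow> bool) \<Rightarrow> nat \<Rightarrow> nat" where
  "lottery_run s r 0 = s"
| "lottery_run s r (Suc t) = lottery_tick (r t) (lottery_run s r t)"

definition draw :: "(nat \<Rightarrow> bool) \<Rightarrow> nat" where
  "draw r = 2 * of_bool (r 0) + of_bool (r 1)"

definition at_most_one_one :: "nat list set" where
  "at_most_one_one = {x. x \<noteq> [] \<and> set x \<subseteq> {0, 1} \<and>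
     (\<forall>k < length x. \<forall>l < length x. x ! k = 1 \<longrightarrow> x ! l = 1 \<longrightarrow> k = l)}"

lemma draw_eq_iff: "draw r = draw r' \<longleftrightarrow> r 0 = r' 0 \<and> r 1 = r' 1"
  by (cases "r 0"; cases "r 1"; cases "r' 0"; cases "r' 1") (simp_all add: draw_def)

lemma config_lottery_nth:
  "i < length x \<Longrightarrow> config lottery_paca x R t ! i = lottery_run (x ! i) (\<lambda>j. R j i) t"
  by (induction t) (auto simp: step_nth delta_def lottery_paca_def)

lemma lottery_run_0: "lottery_run 0 r t = 0"
  by (induction t) (auto simp: lottery_tick_def)

lemma lottery_run_1_late: "7 \<le> t \<Longrightarrow> lottery_run 1 r t = 9"
proof (induction t rule: dec_induct)
  case base
  show ?case
    by (cases "r 0"; cases "r 1") (simp_all add: lottery_tick_def numeral_eq_Suc)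
next
  case (step t)
  then show ?case
    by (simp add: lottery_tick_def)
qed

lemma lottery_run_1_accepting: "lottery_run 1 r t \<in> {0, 8} \<longleftrightarrow> t = 3 + draw r"
proof (cases "t < 7")
  case True
  then consider "t = 0" | "t = 1" | "t = 2" | "t = 3" | "t = 4" | "t = 5" | "t = 6"
    by linarith
  then show ?thesis
    by cases (cases "r 0"; cases "r 1"; simp add: lottery_tick_def draw_def numeral_eq_Suc)+
next
  case False
  then show ?thesis
    using lottery_run_1_late[of t r] by (auto simp: draw_def)
qed

lemma accepting_at_lottery:
  assumes "set x \<subseteq> {0, 1}"
  shows "accepting_at lottery_paca x R t \<longleftrightarrow> (\<forall>i < length x. x ! i = 1 \<longrightarrow> t = 3 + draw (\<lambda>j. R j i))"
proof -
  have "config lottery_paca x R t ! i \<in> {0, 8} \<longleftrightarrow> (x ! i = 1 \<longrightarrow> t = 3 + draw (\<lambda>j. R j i))"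
    if "i < length x" for i
  proof -
    have "x ! i = 0 \<or> x ! i = 1"
      using assms nth_mem[OF that] by auto
    then show ?thesis
    proof
      assume "x ! i = 0"
      then show ?thesis
        by (simp add: config_lottery_nth[OF that] lottery_run_0)
    next
      assume "x ! i = 1"
      then show ?thesis
        using lottery_run_1_accepting[of "\<lambda>j. R j i" t] by (simp add: config_lottery_nth[OF that])
    qed
  qed
  then show ?thesis
    unfolding accepting_at_def subset_code(1) all_set_conv_all_nth by (simp add: lottery_paca_def)
qed

lemma wf_lottery_paca: "wf_paca lottery_paca"
  by (auto simp: wf_paca_def lottery_paca_def lottery_tick_def)

lemma inputs_lottery_paca: "inputs lottery_paca = {x. x \<noteq> [] \<and> set x \<subseteq> {0, 1}}"
  by (simp add: inputs_def lottery_paca_def)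

lemma time_lottery_paca: "has_time_complexity lottery_paca (\<lambda>_. 7)"
  unfolding has_time_complexity_def
proof (intro ballI allI impI)
  fix x R t
  assume "x \<in> inputs lottery_paca" and acc: "accepting_at lottery_paca x R t"
  then have x: "set x \<subseteq> {0, 1}"
    by (simp add: inputs_lottery_paca)
  show "\<exists>t' < 7. accepting_at lottery_paca x R t'"
  proof (cases "\<exists>i < length x. x ! i = 1")
    case True
    then obtain i where "i < length x" "x ! i = 1"
      by blast
    then have "t = 3 + draw (\<lambda>j. R j i)"
      using acc accepting_at_lottery[OF x] by blast
    then show ?thesis
      using acc by (intro exI[of _ t]) (auto simp: draw_def)
  next
    case False
    then show ?thesis
      using accepting_at_lottery[OF x] by (intro exI[of _ 0]) auto
  qed
qed

lemma acc_prob_lottery_in: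
  assumes "x \<in> at_most_one_one"
  shows "acc_prob lottery_paca (\<lambda>_. 7) x = 1"
proof -
  have x: "set x \<subseteq> {0, 1}"
    and unique: "\<And>k l. k < length x \<Longrightarrow> l < length x \<Longrightarrow> x ! k = 1 \<Longrightarrow> x ! l = 1 \<Longrightarrow> k = l"
    using assms by (auto simp: at_most_one_one_def)
  have "accepts lottery_paca (\<lambda>_. 7) x R" for R
  proof (cases "\<exists>i < length x. x ! i = 1")
    case True
    then obtain i where "i < length x" "x ! i = 1"
      by blast
    then have "accepting_at lottery_paca x R (3 + draw (\<lambda>j. R j i))"
      using accepting_at_lottery[OF x] unique by metis
    then show ?thesis
      unfolding accepts_def by (intro exI[of _ "3 + draw (\<lambda>j. R j i)"]) (auto simp: draw_def)
  next
    case False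
    then show ?thesis
      unfolding accepts_def using accepting_at_lottery[OF x] by (intro exI[of _ 0]) auto
  qed
  then show ?thesis
    by (simp add: acc_prob_def card_coin_matrices)
qed

lemma acc_prob_lottery_out:
  assumes "x \<in> inputs lottery_paca" "x \<notin> at_most_one_one"
  shows "acc_prob lottery_paca (\<lambda>_. 7) x \<le> 1/4"
proof -
  have x: "set x \<subseteq> {0, 1}"
    using assms(1) by (simp add: inputs_lottery_paca)
  obtain k l where kl: "k < length x" "l < length x" "x ! k = 1" "x ! l = 1" "k \<noteq> l"
    using assms by (auto simp: at_most_one_one_def inputs_lottery_paca)
  define M where "M = coin_matrices 7 (length x)"
  define M1 where "M1 = {R \<in> M. R 0 k = R 0 l}"
  define M2 where "M2 = {R \<in> M1. R 1 k = R 1 l}"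
  have fin: "finite M"
    by (simp add: M_def finite_coin_matrices)
  have "2 * card M1 = card M"
    unfolding M1_def using fin kl by (intro card_coins_agree) (auto simp: M_def flip_in_coin_matrices)
  moreover have "2 * card M2 = card M1"
    unfolding M2_def using fin kl
    by (intro card_coins_agree) (auto simp: M1_def M_def flip_in_coin_matrices flip_apply)
  moreover have "{R \<in> M. accepts lottery_paca (\<lambda>_. 7) x R} \<subseteq> M2"
  proof
    fix R assume "R \<in> {R \<in> M. accepts lottery_paca (\<lambda>_. 7) x R}"
    then obtain t where R: "R \<in> M" "accepting_at lottery_paca x R t"
      by (auto simp: accepts_def)
    then have "draw (\<lambda>j. R j k) = draw (\<lambda>j. R j l)"
      using accepting_at_lottery[OF x] kl by (metis add_left_cancel)
    then show "R \<in> M2"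
      using R(1) by (simp add: M2_def M1_def draw_eq_iff)
  qed
  then have "card {R \<in> M. accepts lottery_paca (\<lambda>_. 7) x R} \<le> card M2"
    using fin by (intro card_mono) (auto simp: M2_def M1_def)
  ultimately have "4 * real (card {R \<in> M. accepts lottery_paca (\<lambda>_. 7) x R}) \<le> real (card M)"
    by linarith
  then show ?thesis
    by (simp add: acc_prob_def M_def card_coin_matrices)
qed

lemma two_sided_lottery_paca: "two_sided_paca (1/3) lottery_paca (\<lambda>_. 7) at_most_one_one"
  unfolding two_sided_paca_def
proof (intro conjI ballI wf_lottery_paca time_lottery_paca)
  show "at_most_one_one \<subseteq> inputs lottery_paca"
    by (auto simp: at_most_one_one_def inputs_lottery_paca)
next
  fix x assume "x \<in> inputs lottery_paca"
  then show "x \<in> at_most_one_one \<longleftrightarrow> 1 - 1/3 \<le> acc_prob lottery_paca (\<lambda>_. 7) x"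
    and "x \<notin> at_most_one_one \<longleftrightarrow> acc_prob lottery_paca (\<lambda>_. 7) x \<le> 1/3"
    using acc_prob_lottery_in acc_prob_lottery_out by (cases "x \<in> at_most_one_one"; fastforce)+
qed

section \<open>One-sided PACAs for words with at most one 1 need time \<open>\<Omega>(\<surd>n)\<close>\<close>

lemma accepting_at_patch:
  assumes "length x = length z" "length y = length z"
    and "accepting_at C x R t" "accepting_at C y R t"
    and "\<And>k. k < length z \<Longrightarrow>
           (\<forall>k' < length z. k' \<le> k + t \<and> k \<le> k' + t \<longrightarrow> z ! k' = x ! k') \<or>
           (\<forall>k' < length z. k' \<le> k + t \<and> k \<le> k' + t \<longrightarrow> z ! k' = y ! k')"
  shows "accepting_at C z R t"
  unfolding accepting_at_def subset_code(1) all_set_conv_all_nth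
proof (intro allI impI)
  fix k assume k: "k < length (config C z R t)"
  have "config C z R t ! k = config C w R t ! k"
    if "length w = length z" "\<forall>k' < length z. k' \<le> k + t \<and> k \<le> k' + t \<longrightarrow> z ! k' = w ! k'" for w
    using that k by (intro config_nth_local) auto
  then consider "config C z R t ! k = config C x R t ! k" | "config C z R t ! k = config C y R t ! k"
    using assms(1,2) assms(5)[of k] k by (metis length_config)
  then show "config C z R t ! k \<in> acc C"
    using assms(1-4) k by cases (simp_all add: accepting_at_def subset_code(1) all_set_conv_all_nth)
qed

definition indicator_word :: "nat \<Rightarrow> nat set \<Rightarrow> nat list" where
  "indicator_word n P = map (\<lambda>k. of_bool (k \<in> P)) [0..<n]"

lemma length_indicator_word [simp]: "length (indicator_word n P) = n"
  by (simp add: indicator_word_def)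

lemma nth_indicator_word [simp]: "k < n \<Longrightarrow> indicator_word n P ! k = of_bool (k \<in> P)"
  by (simp add: indicator_word_def)

lemma indicator_word_in_inputs:
  assumes "at_most_one_one \<subseteq> inputs C" "0 < n"
  shows "indicator_word n P \<in> inputs C"
proof -
  have "[0] \<in> inputs C" "[1] \<in> inputs C"
    using assms(1) by (auto simp: at_most_one_one_def)
  then show ?thesis
    using assms(2) by (auto simp: inputs_def indicator_word_def)
qed

lemma indicator_word_singleton_in: "p < n \<Longrightarrow> indicator_word n {p} \<in> at_most_one_one"
  by (auto simp: at_most_one_one_def indicator_word_def)

lemma indicator_word_doubleton_notin:
  "p < n \<Longrightarrow> q < n \<Longrightarrow> p \<noteq> q \<Longrightarrow> indicator_word n {p, q} \<notin> at_most_one_one"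
  by (auto simp: at_most_one_one_def)

lemma disjoint_layers_bound:
  fixes E :: "nat \<Rightarrow> nat \<Rightarrow> 'a set"
  assumes "finite M" "M \<noteq> {}"
    and "\<And>i t. i < m \<Longrightarrow> t < \<tau> \<Longrightarrow> E i t \<subseteq> M"
    and "\<And>t. t < \<tau> \<Longrightarrow> disjoint_family_on (\<lambda>i. E i t) {..<m}"
    and "\<And>i. i < m \<Longrightarrow> card M \<le> 2 * card (\<Union>t < \<tau>. E i t)"
  shows "m \<le> 2 * \<tau>"
proof -
  have fin: "finite (E i t)" if "i < m" "t < \<tau>" for i t
    using finite_subset[OF assms(3)[OF that] assms(1)] .
  have "m * card M \<le> (\<Sum>i < m. 2 * card (\<Union>t < \<tau>. E i t))"
    using sum_mono[of "{..<m}" "\<lambda>_. card M"] assms(5) by simp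
  also have "\<dots> = 2 * (\<Sum>i < m. card (\<Union>t < \<tau>. E i t))"
    by (simp add: sum_distrib_left)
  also have "\<dots> \<le> 2 * (\<Sum>i < m. \<Sum>t < \<tau>. card (E i t))"
    by (intro mult_left_mono sum_mono card_UN_le) simp_all
  also have "\<dots> = 2 * (\<Sum>t < \<tau>. \<Sum>i < m. card (E i t))"
    by (subst sum.swap) (rule refl)
  also have "\<dots> = 2 * (\<Sum>t < \<tau>. card (\<Union>i < m. E i t))"
    using assms(4) fin by (intro arg_cong[where f = "(*) 2"] sum.cong refl card_UN_disjoint'[symmetric]) auto
  also have "\<dots> \<le> 2 * (\<tau> * card M)"
  proof -
    have "card (\<Union>i < m. E i t) \<le> card M" if "t < \<tau>" for t
      using assms(3) that by (intro card_mono[OF assms(1)] UN_least) auto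
    then show ?thesis
      using sum_mono[of "{..<\<tau>}" "\<lambda>t. card (\<Union>i < m. E i t)" "\<lambda>_. card M"] by simp
  qed
  finally have "m * card M \<le> 2 * \<tau> * card M"
    by simp
  then show ?thesis
    using assms(1,2) by (simp add: card_gt_0_iff)
qed

lemma one_sided_at_most_one_one_facts:
  assumes "one_sided_paca (1/2) C T at_most_one_one"
  shows "at_most_one_one \<subseteq> inputs C"
    and "\<And>x. x \<in> at_most_one_one \<Longrightarrow> acc_prob C T x \<ge> 1/2"
    and "\<And>x. x \<in> inputs C \<Longrightarrow> x \<notin> at_most_one_one \<Longrightarrow> acc_prob C T x = 0"
  using assms by (auto simp: one_sided_paca_def)

lemma not_accepting_at_distant_ones:
  assumes os: "one_sided_paca (1/2) C T at_most_one_one"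
    and pq: "p + 2 * t < q" "q < n" and t: "t < T n" and R: "R \<in> coin_matrices (T n) n"
  shows "\<not> (accepting_at C (indicator_word n {p}) R t \<and> accepting_at C (indicator_word n {q}) R t)"
proof
  assume acc: "accepting_at C (indicator_word n {p}) R t \<and> accepting_at C (indicator_word n {q}) R t"
  have "accepting_at C (indicator_word n {p, q}) R t"
  proof (rule accepting_at_patch)
    fix k assume "k < length (indicator_word n {p, q})"
    then show "(\<forall>k' < length (indicator_word n {p, q}). k' \<le> k + t \<and> k \<le> k' + t \<longrightarrow>
                 indicator_word n {p, q} ! k' = indicator_word n {p} ! k') \<or>
               (\<forall>k' < length (indicator_word n {p, q}). k' \<le> k + t \<and> k \<le> k' + t \<longrightarrow>
                 indicator_word n {p, q} ! k' = indicator_word n {q} ! k')"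
      using pq by (cases "q \<le> k + t") auto
  qed (use acc in auto)
  then have "accepts C T (indicator_word n {p, q}) R"
    using t by (auto simp: accepts_def)
  moreover have "acc_prob C T (indicator_word n {p, q}) = 0"
    using pq one_sided_at_most_one_one_facts[OF os]
    by (intro one_sided_at_most_one_one_facts(3)[OF os] indicator_word_in_inputs
        indicator_word_doubleton_notin) auto
  ultimately show False
    using R by (simp add: acc_prob_eq_0_iff)
qed

lemma disjoint_acceptance_of_distant_ones:
  fixes p :: "nat \<Rightarrow> nat"
  assumes os: "one_sided_paca (1/2) C T at_most_one_one" and t: "t < T n"
    and apart: "\<And>i j. i < j \<Longrightarrow> j < m \<Longrightarrow> p i + 2 * t < p j"
    and bounded: "\<And>i. i < m \<Longrightarrow> p i < n"
  shows "disjoint_family_on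
           (\<lambda>i. {R \<in> coin_matrices (T n) n. accepting_at C (indicator_word n {p i}) R t}) {..<m}"
proof -
  have "\<not> (accepting_at C (indicator_word n {p i}) R t \<and> accepting_at C (indicator_word n {p j}) R t)"
    if "i < j" "j < m" "R \<in> coin_matrices (T n) n" for i j R
    using not_accepting_at_distant_ones[OF os apart[OF that(1,2)] bounded[OF that(2)] t that(3)] .
  then show ?thesis
    unfolding disjoint_family_on_def by (auto simp: neq_iff)
qed

lemma one_sided_at_most_one_one_time_bound:
  assumes os: "one_sided_paca (1/2) C T at_most_one_one"
  shows "n \<le> 2 * T n * (2 * T n + 1)"
proof (rule ccontr)
  assume small: "\<not> ?thesis"
  define \<tau> where "\<tau> = T n"
  define p where "p i = i * (2 * \<tau> + 1)" for i
  define M where "M = coin_matrices \<tau> n"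
  define E where "E i t = {R \<in> M. accepting_at C (indicator_word n {p i}) R t}" for i t
  have p_lt: "p i < n" if "i < 2 * \<tau> + 1" for i
  proof -
    have "p i \<le> 2 * \<tau> * (2 * \<tau> + 1)"
      unfolding p_def using that by (intro mult_le_mono1) simp
    then show ?thesis
      using small by (simp add: \<tau>_def)
  qed
  have p_apart: "p i + 2 * t < p j" if "i < j" "t < \<tau>" for i j t
  proof -
    have "p i + (2 * \<tau> + 1) \<le> p j"
      using mult_le_mono1[of "Suc i" j "2 * \<tau> + 1"] that(1) by (simp add: p_def)
    then show ?thesis
      using that(2) by linarith
  qed
  have "2 * \<tau> + 1 \<le> 2 * \<tau>"
  proof (rule disjoint_layers_bound[where M = M and E = E])
    show "finite M" "M \<noteq> {}"
      using card_coin_matrices[of \<tau> n] by (auto simp: M_def finite_coin_matrices)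
    show "E i t \<subseteq> M" for i t
      by (auto simp: E_def)
    show "disjoint_family_on (\<lambda>i. E i t) {..<2 * \<tau> + 1}" if "t < \<tau>" for t
      unfolding E_def M_def \<tau>_def
      using that p_apart p_lt by (intro disjoint_acceptance_of_distant_ones[OF os]) (auto simp: \<tau>_def)
    show "card M \<le> 2 * card (\<Union>t < \<tau>. E i t)" if "i < 2 * \<tau> + 1" for i
    proof -
      have "acc_prob C T (indicator_word n {p i}) \<ge> 1/2"
        using p_lt[OF that] by (intro one_sided_at_most_one_one_facts(2)[OF os] indicator_word_singleton_in)
      moreover have "(\<Union>t < \<tau>. E i t) = {R \<in> M. accepts C T (indicator_word n {p i}) R}"
        by (auto simp: E_def accepts_def \<tau>_def)
      ultimately show ?thesis
        using acc_prob_ge_half_iff[of C T "indicator_word n {p i}"] by (simp add: M_def \<tau>_def)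
    qed
  qed
  then show False
    by simp
qed

lemma not_one_sided_at_most_one_one_sqrt:
  assumes "(\<lambda>n. real (T n)) \<in> o(\<lambda>n. sqrt (real n))"
  shows "\<not> one_sided_paca (1/2) C T at_most_one_one"
proof
  assume os: "one_sided_paca (1/2) C T at_most_one_one"
  have "eventually (\<lambda>n. norm (real (T n)) \<le> 1/4 * norm (sqrt (real n))) at_top"
    by (rule landau_o.smallD[OF assms]) simp
  then obtain N where N: "\<And>n. n \<ge> N \<Longrightarrow> real (T n) \<le> sqrt (real n) / 4"
    by (auto simp: eventually_at_top_linorder)
  define n where "n = Suc N"
  define s where "s = sqrt (real n)"
  have s: "1 \<le> s" "s * s = real n"
    by (simp_all add: s_def n_def)
  have "2 * real (T n) \<le> s / 2"
    using N[of n] by (simp add: n_def s_def)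
  then have "real (2 * T n * (2 * T n + 1)) \<le> s / 2 * (s / 2 + 1)"
    by (simp only: of_nat_mult of_nat_add) (intro mult_mono; simp)
  also have "\<dots> = s * s / 4 + s / 2"
    by (simp add: field_simps)
  also have "\<dots> < real n"
    using s mult_left_mono[OF s(1), of s] by linarith
  finally show False
    using one_sided_at_most_one_one_time_bound[OF os, of n] by linarith
qed

theorem theorem1:
  shows "(\<forall>C T L. one_sided_paca (1/2) C T L \<longrightarrow>
            (\<exists>C' T'. two_sided_paca (1/3) C' T' L \<and>
                (\<lambda>n. real (T' n)) \<in> O(\<lambda>n. real (T n))))
       \<and> (\<exists>L::nat list set.
            (\<exists>C c. two_sided_paca (1/3) C (\<lambda>_. c) L) \<and>
            \<not> (\<exists>C T. one_sided_paca (1/2) C T L \<and>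
                   (\<lambda>n. real (T n)) \<in> o(\<lambda>n. sqrt (real n))))"
proof
  show "\<forall>C T L. one_sided_paca (1/2) C T L \<longrightarrow>
          (\<exists>C' T'. two_sided_paca (1/3) C' T' L \<and> (\<lambda>n. real (T' n)) \<in> O(\<lambda>n. real (T n)))"
  proof (intro allI impI)
    fix C T L
    assume "one_sided_paca (1/2) C T L"
    then have "two_sided_paca (1/3) (pair_paca C) (\<lambda>n. 2 * T n) L"
      by (rule two_sided_pair_paca)
    moreover have "(\<lambda>n. real (2 * T n)) \<in> O(\<lambda>n. real (T n))"
      by (intro landau_o.bigI[of 2]) auto
    ultimately show "\<exists>C' T'. two_sided_paca (1/3) C' T' L \<and> (\<lambda>n. real (T' n)) \<in> O(\<lambda>n. real (T n))"
      by blast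
  qed
  show "\<exists>L::nat list set. (\<exists>C c. two_sided_paca (1/3) C (\<lambda>_. c) L) \<and>
          \<not> (\<exists>C T. one_sided_paca (1/2) C T L \<and> (\<lambda>n. real (T n)) \<in> o(\<lambda>n. sqrt (real n)))"
    using two_sided_lottery_paca not_one_sided_at_most_one_one_sqrt by blast
qed

end
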